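(* For all $P,Q\in\mathbf{R}^3$, $\rho_t(P,Q)\to d_E(P,Q)$ as $t$ increases to $1$ (i.e. $\lim_{t\to 1^-}\rho_t(P,Q)=d_E(P,Q)$).
   Context: $d_E$ denotes the Euclidean metric on $\mathbf{R}^3$. For $0<t\leq 1$ let $\alpha=\sin^{-1}\!\left(\frac{\sqrt{2-t^2}-t}{2}\right)$. For $X,Y\in\mathbf{R}^3$ with $d_E(X,Y)\leq 2$, choose a sphere of radius $1$ with center $C$ containing $X$ and $Y$, let $X'=2C-X$, and define $$d_t(X,Y)=\begin{cases} d_E(X,Y) & \text{if } \angle XCY\leq \pi-2\alpha,\\ 2t+d_E(X',Y) & \text{if } \angle XCY>\pi-2\alpha,\end{cases}$$ which depends only on $s=d_E(X,Y)$ (since $\angle XCY=2\sin^{-1}(s/2)$ and $d_E(X',Y)=\sqrt{4-s^2}$). For $P,Q\in\mathbf{R}^3$ let $\Gamma_{P,Q}$ be the set of finite sequences $(X_0,\dots,X_n)$, $n\in\mathbf{N}$, in $\mathbf{R}^3$ with $X_0=P$, $X_n=Q$, $d_E(X_{i-1},X_i)\leq 2$ for $1\leq i\leq n$, and $$\rho_t(P,Q)=\inf_{(X_0,\dots,X_n)\in\Gamma_{P,Q}}\sum_{i=1}^n d_t(X_{i-1},X_i).$$ *)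

theory Defs
  imports "HOL-Analysis.Analysis"
begin

definition alpha_t :: "real \<Rightarrow> real" where
  "alpha_t t = arcsin ((sqrt (2 - t\<^sup>2) - t) / 2)"

text \<open>d_t(X,Y) for d_E(X,Y) \<le> 2, expressed through s = d_E(X,Y):
  the angle XCY equals 2 arcsin(s/2) and d_E(X',Y) = sqrt(4 - s^2).\<close>
definition d_t :: "real \<Rightarrow> real^3 \<Rightarrow> real^3 \<Rightarrow> real" where
  "d_t t X Y = (let s = dist X Y in
      if 2 * arcsin (s / 2) \<le> pi - 2 * alpha_t t then s
      else 2 * t + sqrt (4 - s\<^sup>2))"

definition Gamma :: "real^3 \<Rightarrow> real^3 \<Rightarrow> ((nat \<Rightarrow> real^3) \<times> nat) set" where
  "Gamma P Q = {(X, n). X 0 = P \<and> X n = Q \<and> (\<forall>i\<in>{1..n}. dist (X (i - 1)) (X i) \<le> 2)}"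

definition rho_t :: "real \<Rightarrow> real^3 \<Rightarrow> real^3 \<Rightarrow> real" where
  "rho_t t P Q = Inf ((\<lambda>(X, n). \<Sum>i=1..n. d_t t (X (i - 1)) (X i)) ` Gamma P Q)"

end

theory Submission
  imports Defs
begin

text \<open>For \<open>0 \<le> t \<le> 1\<close> every admissible step costs at least \<open>t\<close> times its Euclidean
  length, so by the triangle inequality \<open>t \<cdot> d\<^sub>E(P,Q) \<le> \<rho>\<^sub>t(P,Q)\<close>. Conversely
  \<open>\<alpha>\<^sub>t \<le> \<pi>/4\<close>, so a step of length at most \<open>\<surd>2\<close> subtends an angle at most
  \<open>\<pi>/2 \<le> \<pi> - 2\<alpha>\<^sub>t\<close> and costs exactly its Euclidean length; subdividing the segment
  from \<open>P\<close> to \<open>Q\<close> into short steps gives \<open>\<rho>\<^sub>t(P,Q) \<le> d\<^sub>E(P,Q)\<close>. Letting \<open>t \<rightarrow> 1\<close>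
  squeezes \<open>\<rho>\<^sub>t(P,Q)\<close> to \<open>d\<^sub>E(P,Q)\<close>.\<close>

definition chain_cost :: "real \<Rightarrow> (nat \<Rightarrow> real^3) \<Rightarrow> nat \<Rightarrow> real" where
  "chain_cost t X n = (\<Sum>i=1..n. d_t t (X (i - 1)) (X i))"

lemma rho_t_eq_Inf_chain_cost:
  "rho_t t P Q = Inf ((\<lambda>(X, n). chain_cost t X n) ` Gamma P Q)"
  by (simp add: rho_t_def chain_cost_def)

lemma arcsin_le_pi_quarter:
  assumes "-1 \<le> x" "x \<le> sqrt 2 / 2"
  shows "arcsin x \<le> pi / 4"
proof -
  have "arcsin (sqrt 2 / 2) = pi / 4"
    using arcsin_sin[of "pi / 4"] by (simp add: sin_45)
  moreover have "sqrt 2 / 2 \<le> 1"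
    using real_sqrt_le_mono[of 2 4] by simp
  ultimately show ?thesis
    using arcsin_le_arcsin[of x "sqrt 2 / 2"] assms by simp
qed

lemma alpha_t_le_pi_quarter:
  assumes "0 \<le> t" "t \<le> 1"
  shows "alpha_t t \<le> pi / 4"
proof -
  define r where "r = sqrt (2 - t\<^sup>2)"
  have "t\<^sup>2 \<le> 1"
    using assms by (simp add: power_le_one)
  then have "0 \<le> r" "r \<le> sqrt 2"
    unfolding r_def by (simp_all add: real_sqrt_le_mono)
  then show ?thesis
    unfolding alpha_t_def r_def[symmetric] using assms by (intro arcsin_le_pi_quarter) auto
qed

lemma d_t_eq_dist:
  assumes "0 \<le> t" "t \<le> 1" "dist X Y \<le> sqrt 2"
  shows "d_t t X Y = dist X Y"
proof -
  have "arcsin (dist X Y / 2) \<le> pi / 4"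
    by (rule arcsin_le_pi_quarter) (use assms(3) zero_le_dist[of X Y] in linarith)+
  with alpha_t_le_pi_quarter[OF assms(1,2)]
  have "2 * arcsin (dist X Y / 2) \<le> pi - 2 * alpha_t t"
    by simp
  then show ?thesis
    by (simp add: d_t_def)
qed

lemma scaled_dist_le_d_t:
  assumes "0 \<le> t" "t \<le> 1" "dist X Y \<le> 2"
  shows "t * dist X Y \<le> d_t t X Y"
proof -
  have "t * dist X Y \<le> dist X Y"
    using assms by (simp add: mult_left_le_one_le)
  moreover have "t * dist X Y \<le> 2 * t"
    using assms by (simp add: mult_left_mono mult.commute)
  moreover have "0 \<le> sqrt (4 - (dist X Y)\<^sup>2)"
    using assms(3) power_mono[of "dist X Y" 2 2] by simp
  ultimately have "t * dist X Y \<le> min (dist X Y) (2 * t + sqrt (4 - (dist X Y)\<^sup>2))"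
    by linarith
  then show ?thesis
    by (simp add: d_t_def Let_def)
qed

lemma dist_le_sum_dist_chain:
  fixes X :: "nat \<Rightarrow> 'a::metric_space"
  shows "dist (X 0) (X n) \<le> (\<Sum>i=1..n. dist (X (i - 1)) (X i))"
proof (induction n)
  case 0
  then show ?case by simp
next
  case (Suc n)
  have "dist (X 0) (X (Suc n)) \<le> dist (X 0) (X n) + dist (X n) (X (Suc n))"
    by (rule dist_triangle)
  also have "\<dots> \<le> (\<Sum>i=1..n. dist (X (i - 1)) (X i)) + dist (X n) (X (Suc n))"
    using Suc.IH by simp
  also have "\<dots> = (\<Sum>i=1..Suc n. dist (X (i - 1)) (X i))"
    by simp
  finally show ?case .
qed

lemma scaled_dist_le_chain_cost:
  assumes "0 \<le> t" "t \<le> 1" "(X, n) \<in> Gamma P Q"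
  shows "t * dist P Q \<le> chain_cost t X n"
proof -
  have ends: "X 0 = P" "X n = Q" and steps: "\<And>i. i \<in> {1..n} \<Longrightarrow> dist (X (i - 1)) (X i) \<le> 2"
    using assms(3) by (auto simp: Gamma_def)
  have "t * dist P Q \<le> t * (\<Sum>i=1..n. dist (X (i - 1)) (X i))"
    using dist_le_sum_dist_chain[of X n] ends assms(1) by (simp add: mult_left_mono)
  also have "\<dots> = (\<Sum>i=1..n. t * dist (X (i - 1)) (X i))"
    by (simp add: sum_distrib_left)
  also have "\<dots> \<le> chain_cost t X n"
    unfolding chain_cost_def using assms(1,2) steps by (intro sum_mono scaled_dist_le_d_t)
  finally show ?thesis .
qed

definition segment_chain :: "'a::real_normed_vector \<Rightarrow> 'a \<Rightarrow> nat \<Rightarrow> nat \<Rightarrow> 'a" where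
  "segment_chain P Q n i = P + (real i / real n) *\<^sub>R (Q - P)"

lemma dist_segment_chain_step:
  assumes "i \<in> {1..n}"
  shows "dist (segment_chain P Q n (i - 1)) (segment_chain P Q n i) = dist P Q / real n"
proof -
  have "\<bar>real (i - 1) / real n - real i / real n\<bar> = 1 / real n"
    using assms by (simp add: of_nat_diff diff_divide_distrib[symmetric])
  then have "dist (segment_chain P Q n (i - 1)) (segment_chain P Q n i) = norm (Q - P) / real n"
    by (simp add: segment_chain_def)
  then show ?thesis
    by (simp add: dist_norm norm_minus_commute)
qed

lemma obtain_subdivision_step_le_1:
  fixes d :: real
  obtains n :: nat where "n > 0" "d / real n \<le> 1"
proof
  show "nat \<lceil>d\<rceil> + 1 > 0"
    by simp
  show "d / real (nat \<lceil>d\<rceil> + 1) \<le> 1"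
    by (simp add: divide_le_eq) linarith
qed

lemma segment_chain_in_Gamma:
  assumes "n > 0" "dist P Q / real n \<le> 2"
  shows "(segment_chain P Q n, n) \<in> Gamma P Q"
  using assms dist_segment_chain_step[of _ n P Q] by (auto simp: Gamma_def segment_chain_def)

lemma rho_t_le_dist:
  assumes "0 \<le> t" "t \<le> 1"
  shows "rho_t t P Q \<le> dist P Q"
proof -
  obtain n where "n > 0" and short: "dist P Q / real n \<le> 1"
    by (rule obtain_subdivision_step_le_1)
  let ?X = "segment_chain P Q n"
  have "(?X, n) \<in> Gamma P Q"
    by (rule segment_chain_in_Gamma) (use \<open>n > 0\<close> short in linarith)+
  moreover have "d_t t (?X (i - 1)) (?X i) = dist P Q / real n" if "i \<in> {1..n}" for i
  proof -
    have "dist P Q / real n \<le> sqrt 2"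
      using short real_sqrt_ge_one[of 2] by linarith
    then show ?thesis
      using dist_segment_chain_step[OF that, of P Q] by (subst d_t_eq_dist[OF assms]) simp_all
  qed
  then have "chain_cost t ?X n = dist P Q"
    using \<open>n > 0\<close> by (simp add: chain_cost_def)
  moreover have "bdd_below ((\<lambda>(X, n). chain_cost t X n) ` Gamma P Q)"
    using scaled_dist_le_chain_cost[OF assms] by (intro bdd_belowI[of _ "t * dist P Q"]) auto
  ultimately show ?thesis
    unfolding rho_t_eq_Inf_chain_cost by (auto intro: cInf_lower2)
qed

lemma scaled_dist_le_rho_t:
  assumes "0 \<le> t" "t \<le> 1"
  shows "t * dist P Q \<le> rho_t t P Q"
proof -
  obtain n where "n > 0" "dist P Q / real n \<le> 1"
    by (rule obtain_subdivision_step_le_1)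
  then have "Gamma P Q \<noteq> {}"
    using segment_chain_in_Gamma[of n P Q] by fastforce
  then show ?thesis
    unfolding rho_t_eq_Inf_chain_cost
    using scaled_dist_le_chain_cost[OF assms] by (intro cInf_greatest) auto
qed

theorem mainTheorem5:
  fixes P Q :: "real^3"
  shows "((\<lambda>t. rho_t t P Q) \<longlongrightarrow> dist P Q) (at_left 1)"
proof (rule tendsto_sandwich[where f = "\<lambda>t. t * dist P Q" and h = "\<lambda>t. dist P Q"])
  have unit: "\<forall>\<^sub>F t in at_left (1::real). 0 \<le> t \<and> t \<le> 1"
    using eventually_at_left_real[of 0 "1::real"] by (auto elim: eventually_mono)
  show "\<forall>\<^sub>F t in at_left 1. t * dist P Q \<le> rho_t t P Q"
    using unit by eventually_elim (auto intro: scaled_dist_le_rho_t)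
  show "\<forall>\<^sub>F t in at_left 1. rho_t t P Q \<le> dist P Q"
    using unit by eventually_elim (auto intro: rho_t_le_dist)
  show "((\<lambda>t. t * dist P Q) \<longlongrightarrow> dist P Q) (at_left 1)"
    by (auto intro!: tendsto_eq_intros)
  show "((\<lambda>t. dist P Q) \<longlongrightarrow> dist P Q) (at_left 1)"
    by simp
qed

end
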